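(* Let $T$ be a quasi-binary tree with $|V(T)|>1$ and vertex weight function $\omega:V(T)\to\mathbb{R}$. Let $\gamma,\eta\in\mathbb{R}$ be such that $\gamma\ge\omega_3$ and $$\max\left\{\frac{\omega_1-\gamma}{2},\ \omega_2-\gamma\right\}\le \eta\le \frac{\omega(T)}{2}.$$ Then there exists an edge $e\in E(T)$ such that, denoting by $C_e^1, C_e^2$ the two connected components of $T\setminus\{e\}$, we have $$\eta\le \omega(C_e^i)\le 2\eta+\gamma$$ for some $i\in\{1,2\}$.
   Context: A binary tree is a tree in which every vertex has degree $3$, except for pending vertices (degree $1$) and one root vertex (degree $2$). A tree is quasi-binary if it is a connected subgraph of a binary tree; in particular every vertex has degree $1$, $2$ or $3$. For a subgraph $H$ write $\omega(H)=\sum_{v\in V(H)}\omega(v)$. For $i=1,2,3$ let $V_i$ be the set of vertices of degree $i$, and let $\omega_i=\max\{\omega(v): v\in V_j \text{ for some } j \text{ with } i\le j\le 3\}$ (the maximum weight of a vertex of degree at least $i$). *)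

theory Defs
  imports Complex_Main
begin

definition simple_graph :: "'a set \<Rightarrow> 'a set set \<Rightarrow> bool" where
  "simple_graph V E \<longleftrightarrow> finite V \<and> (\<forall>e\<in>E. \<exists>u v. e = {u, v} \<and> u \<in> V \<and> v \<in> V \<and> u \<noteq> v)"

definition adj :: "'a set set \<Rightarrow> 'a \<Rightarrow> 'a \<Rightarrow> bool" where
  "adj E u v \<longleftrightarrow> {u, v} \<in> E \<and> u \<noteq> v"

definition reach :: "'a set \<Rightarrow> 'a set set \<Rightarrow> 'a \<Rightarrow> 'a \<Rightarrow> bool" where
  "reach V E u v \<longleftrightarrow> (u, v) \<in> {(x, y). x \<in> V \<and> y \<in> V \<and> adj E x y}\<^sup>* \<and> u \<in> V \<and> v \<in> V"

definition connected_graph :: "'a set \<Rightarrow> 'a set set \<Rightarrow> bool" where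
  "connected_graph V E \<longleftrightarrow> V \<noteq> {} \<and> (\<forall>u\<in>V. \<forall>v\<in>V. reach V E u v)"

definition is_cycle :: "'a set \<Rightarrow> 'a set set \<Rightarrow> 'a list \<Rightarrow> bool" where
  "is_cycle V E cs \<longleftrightarrow> length cs \<ge> 3 \<and> distinct cs \<and> set cs \<subseteq> V \<and>
     (\<forall>i. Suc i < length cs \<longrightarrow> adj E (cs ! i) (cs ! Suc i)) \<and> adj E (last cs) (hd cs)"

definition is_tree :: "'a set \<Rightarrow> 'a set set \<Rightarrow> bool" where
  "is_tree V E \<longleftrightarrow> simple_graph V E \<and> connected_graph V E \<and> (\<nexists>cs. is_cycle V E cs)"

definition degree :: "'a set set \<Rightarrow> 'a \<Rightarrow> nat" where
  "degree E v = card {e \<in> E. v \<in> e}"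

definition binary_tree :: "'a set \<Rightarrow> 'a set set \<Rightarrow> bool" where
  "binary_tree V E \<longleftrightarrow> is_tree V E \<and>
     (\<exists>r\<in>V. degree E r = 2 \<and> (\<forall>v\<in>V - {r}. degree E v = 1 \<or> degree E v = 3))"

text \<open>Quasi-binary tree: a tree which is (isomorphic to) a connected subgraph of a binary tree.
  The ambient binary tree is taken on vertex type nat; the subgraph relation is expressed
  by an injective vertex map sending edges to edges.\<close>
definition quasi_binary_tree :: "'a set \<Rightarrow> 'a set set \<Rightarrow> bool" where
  "quasi_binary_tree V E \<longleftrightarrow> is_tree V E \<and>
     (\<exists>(VB :: nat set) EB f. binary_tree VB EB \<and> inj_on f V \<and> f ` V \<subseteq> VB \<and>
        (\<forall>u v. {u, v} \<in> E \<longrightarrow> {f u, f v} \<in> EB))"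

definition components :: "'a set \<Rightarrow> 'a set set \<Rightarrow> 'a set set" where
  "components V E = {{y \<in> V. reach V E x y} | x. x \<in> V}"

definition weight :: "('a \<Rightarrow> real) \<Rightarrow> 'a set \<Rightarrow> real" where
  "weight \<omega> H = (\<Sum>v\<in>H. \<omega> v)"

end

theory Submission
  imports Defs "HOL-Library.Transitive_Closure_Table"
begin

text \<open>Deleting an edge \<open>uv\<close> of a tree splits it into the side of \<open>u\<close> and the side of \<open>v\<close>.
  Among all edges with a side of weight at least \<open>\<eta>\<close> (one exists since \<open>\<eta> \<le> \<omega>(T)/2\<close>),
  pick one, say with side \<open>S\<close> containing \<open>v\<close>, for which \<open>S\<close> has the fewest vertices.
  Then \<open>S\<close> is \<open>v\<close> together with the sides of the at most \<open>deg v - 1\<close> other edges at \<open>v\<close>,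
  each of weight below \<open>\<eta>\<close> by minimality. Hence \<open>\<omega>(S) \<le> \<omega>(v) + (deg v - 1) \<eta>\<close>, which is
  at most \<open>2\<eta> + \<gamma>\<close> by the hypothesis matching \<open>deg v \<in> {1,2,3}\<close>.\<close>

lemma adj_commute: "adj E x y \<longleftrightarrow> adj E y x"
  by (auto simp: adj_def insert_commute)

lemma reach_induct[consumes 1, case_names refl step]:
  assumes "reach V E x y" "P x"
    "\<And>y z. reach V E x y \<Longrightarrow> P y \<Longrightarrow> adj E y z \<Longrightarrow> z \<in> V \<Longrightarrow> P z"
  shows "P y"
proof -
  from assms(1) have r: "(x, y) \<in> {(x, y). x \<in> V \<and> y \<in> V \<and> adj E x y}\<^sup>*" and "x \<in> V"
    by (auto simp: reach_def)
  from r show ?thesis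
  proof (induction rule: rtrancl_induct)
    case base
    show ?case using assms(2) .
  next
    case (step y z)
    then have "reach V E x y" using \<open>x \<in> V\<close> by (auto simp: reach_def)
    then show ?case using assms(3) step by auto
  qed
qed

lemma reach_in_V: "reach V E x y \<Longrightarrow> x \<in> V \<and> y \<in> V"
  by (simp add: reach_def)

lemma reach_refl: "x \<in> V \<Longrightarrow> reach V E x x"
  by (simp add: reach_def)

lemma reach_step: "reach V E x y \<Longrightarrow> adj E y z \<Longrightarrow> z \<in> V \<Longrightarrow> reach V E x z"
  unfolding reach_def by (auto intro: rtrancl_into_rtrancl)

lemma reach_edge: "adj E x y \<Longrightarrow> x \<in> V \<Longrightarrow> y \<in> V \<Longrightarrow> reach V E x y"
  by (metis reach_refl reach_step)

lemma reach_trans: "reach V E x y \<Longrightarrow> reach V E y z \<Longrightarrow> reach V E x z"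
  unfolding reach_def by (auto intro: rtrancl_trans)

lemma reach_sym:
  assumes "reach V E x y"
  shows "reach V E y x"
  using assms
proof (induction rule: reach_induct)
  case refl
  show ?case using reach_in_V[OF assms] reach_refl by metis
next
  case (step y z)
  then show ?case by (meson adj_commute reach_in_V reach_edge reach_trans)
qed

lemma reach_mono:
  assumes "E1 \<subseteq> E2" and "reach V E1 x y"
  shows "reach V E2 x y"
  using assms(2)
proof (induction rule: reach_induct)
  case refl
  show ?case using reach_in_V[OF assms(2)] reach_refl by metis
next
  case (step y z)
  then have "adj E2 y z" using assms(1) by (auto simp: adj_def)
  then show ?case using step reach_step by metis
qed

definition component_of :: "'a set \<Rightarrow> 'a set set \<Rightarrow> 'a \<Rightarrow> 'a set" where
  "component_of V E x = {y \<in> V. reach V E x y}"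

lemma component_of_in_components: "x \<in> V \<Longrightarrow> component_of V E x \<in> components V E"
  by (auto simp: component_of_def components_def)

definition neighbours :: "'a set set \<Rightarrow> 'a \<Rightarrow> 'a set" where
  "neighbours E v = {w. {v, w} \<in> E}"

definition edges_avoiding :: "'a set set \<Rightarrow> 'a \<Rightarrow> 'a set set" where
  "edges_avoiding E v = {e \<in> E. v \<notin> e}"

definition side :: "'a set \<Rightarrow> 'a set set \<Rightarrow> 'a \<Rightarrow> 'a \<Rightarrow> 'a set" where
  "side V E u v = component_of V (E - {{u, v}}) v"

lemma reach_edges_avoiding_avoids:
  assumes "reach V (edges_avoiding E v) w y" and "w \<noteq> v"
  shows "y \<noteq> v"
  using assms
  by (induction rule: reach_induct) (auto simp: adj_def edges_avoiding_def)

locale tree =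
  fixes V :: "'a set" and E :: "'a set set"
  assumes is_tree: "is_tree V E"
begin

lemma finite_V: "finite V"
  using is_tree by (simp add: is_tree_def simple_graph_def)

lemma finite_side: "finite (side V E u v)"
  using finite_V by (simp add: side_def component_of_def)

lemma edge_endpoints: "{a, b} \<in> E \<Longrightarrow> a \<noteq> b \<and> a \<in> V \<and> b \<in> V"
  using is_tree unfolding is_tree_def simple_graph_def by (metis doubleton_eq_iff)

text \<open>A path from \<open>b\<close> to \<open>a\<close> avoiding the edge \<open>ab\<close> closes up to a cycle with it.\<close>

lemma edge_is_bridge:
  assumes ab: "{a, b} \<in> E"
  shows "\<not> reach V (E - {{a, b}}) b a"
proof
  assume "reach V (E - {{a, b}}) b a"
  define R where "R = {(x, y). x \<in> V \<and> y \<in> V \<and> adj (E - {{a, b}}) x y}"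
  have "(\<lambda>x y. (x, y) \<in> R)\<^sup>*\<^sup>* b a"
    using \<open>reach V (E - {{a, b}}) b a\<close> by (simp add: reach_def R_def rtranclp_rtrancl_eq)
  then obtain ys where p: "rtrancl_path (\<lambda>x y. (x, y) \<in> R) b ys a" and d: "distinct (b # ys)"
    by (metis rtranclp_eq_rtrancl_path rtrancl_path_distinct)
  have abV: "a \<noteq> b" "a \<in> V" "b \<in> V" using edge_endpoints[OF ab] by auto
  have "ys \<noteq> []" using p abV by (auto elim: rtrancl_path.cases)
  then have last_ys: "last ys = a" using rtrancl_path_last[OF p] by blast
  have "ys \<noteq> [a]"
  proof
    assume "ys = [a]"
    then have "(b, a) \<in> R" using p by (auto elim!: rtrancl_path.cases)
    then show False by (auto simp: R_def adj_def insert_commute)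
  qed
  then have len: "length ys \<ge> 2"
    using \<open>ys \<noteq> []\<close> last_ys by (cases ys; cases "tl ys"; auto)
  have rel: "\<And>i. i < length ys \<Longrightarrow> ((b # ys) ! i, ys ! i) \<in> R"
    using rtrancl_path_nth[OF p] by blast
  have "is_cycle V E (b # ys)"
    unfolding is_cycle_def
  proof (intro conjI allI impI)
    show "3 \<le> length (b # ys)" using len by simp
    show "distinct (b # ys)" by (rule d)
    show "set (b # ys) \<subseteq> V"
      using abV rel by (auto simp: R_def in_set_conv_nth)
    show "adj E ((b # ys) ! i) ((b # ys) ! Suc i)" if "Suc i < length (b # ys)" for i
      using that rel[of i] by (auto simp: R_def adj_def)
    show "adj E (last (b # ys)) (hd (b # ys))"
      using ab abV last_ys \<open>ys \<noteq> []\<close> by (simp add: adj_def)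
  qed
  then show False using is_tree by (auto simp: is_tree_def)
qed

lemma side_eq_component_avoiding:
  assumes e: "{v, w} \<in> E"
  shows "side V E v w = component_of V (edges_avoiding E v) w"
proof
  have vw: "v \<noteq> w" "v \<in> V" "w \<in> V" using edge_endpoints[OF e] by auto
  show "component_of V (edges_avoiding E v) w \<subseteq> side V E v w"
    using reach_mono[of "edges_avoiding E v" "E - {{v, w}}"]
    by (auto simp: side_def component_of_def edges_avoiding_def)
  show "side V E v w \<subseteq> component_of V (edges_avoiding E v) w"
  proof
    fix y assume "y \<in> side V E v w"
    then have r: "reach V (E - {{v, w}}) w y" by (simp add: side_def component_of_def)
    then have "reach V (edges_avoiding E v) w y"
    proof (induction rule: reach_induct)
      case refl
      show ?case using vw reach_refl by metis
    next
      case (step y z)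
      have "y \<noteq> v" using reach_edges_avoiding_avoids[OF step.IH] vw by auto
      moreover have "z \<noteq> v"
        using edge_is_bridge[OF e] reach_step[OF step.hyps(1,2,3)] by auto
      ultimately have "adj (edges_avoiding E v) y z"
        using step.hyps(2) by (auto simp: adj_def edges_avoiding_def)
      then show ?case using step reach_step by metis
    qed
    then show "y \<in> component_of V (edges_avoiding E v) w"
      using reach_in_V[OF r] by (simp add: component_of_def)
  qed
qed

lemma vertex_notin_side:
  assumes "{v, w} \<in> E"
  shows "v \<notin> side V E v w"
  using assms edge_endpoints reach_edges_avoiding_avoids
  by (fastforce simp: side_eq_component_avoiding component_of_def)

lemma side_eq_insert_sides:
  assumes e: "{u, v} \<in> E"
  shows "side V E u v = insert v (\<Union>w\<in>neighbours E v - {u}. side V E v w)"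
proof
  have uv: "u \<noteq> v" "u \<in> V" "v \<in> V" using edge_endpoints[OF e] by auto
  have sides: "side V E v w = component_of V (edges_avoiding E v) w"
    if "w \<in> neighbours E v" for w
    using that side_eq_component_avoiding by (simp add: neighbours_def)
  show "side V E u v \<subseteq> insert v (\<Union>w\<in>neighbours E v - {u}. side V E v w)"
  proof
    fix y assume "y \<in> side V E u v"
    then have "reach V (E - {{u, v}}) v y" by (simp add: side_def component_of_def)
    then show "y \<in> insert v (\<Union>w\<in>neighbours E v - {u}. side V E v w)"
    proof (induction rule: reach_induct)
      case refl
      show ?case by simp
    next
      case (step y z)
      consider "z = v" | "z \<noteq> v" "y = v" | "z \<noteq> v" "y \<noteq> v" by blast
      then show ?case
      proof cases
        case 2
        then have "z \<in> neighbours E v - {u}"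
          using step.hyps(2) by (auto simp: adj_def neighbours_def insert_commute)
        moreover have "z \<in> component_of V (edges_avoiding E v) z"
          using step.hyps(3) reach_refl by (simp add: component_of_def)
        ultimately show ?thesis using sides by blast
      next
        case 3
        then obtain w where w: "w \<in> neighbours E v - {u}"
          and "y \<in> component_of V (edges_avoiding E v) w"
          using step.IH sides by auto
        moreover have "adj (edges_avoiding E v) y z"
          using step.hyps(2) 3 by (auto simp: adj_def edges_avoiding_def)
        ultimately have "z \<in> component_of V (edges_avoiding E v) w"
          using step.hyps(3) reach_step by (auto simp: component_of_def)
        then show ?thesis using w sides by blast
      qed simp
    qed
  qed
  show "insert v (\<Union>w\<in>neighbours E v - {u}. side V E v w) \<subseteq> side V E u v"
  proof (intro insert_subsetI UN_least subsetI)
    show "v \<in> side V E u v" using uv by (simp add: side_def component_of_def reach_refl)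
    fix w x assume w: "w \<in> neighbours E v - {u}" and x: "x \<in> side V E v w"
    then have ew: "{v, w} \<in> E" "w \<noteq> u" by (auto simp: neighbours_def)
    have wV: "v \<noteq> w" "w \<in> V" using edge_endpoints[OF ew(1)] by auto
    have "{v, w} \<noteq> {u, v}" using ew uv by (auto simp: doubleton_eq_iff)
    then have "adj (E - {{u, v}}) v w" using ew wV by (simp add: adj_def)
    then have "reach V (E - {{u, v}}) v w" using uv wV by (simp add: reach_edge)
    moreover have "reach V (E - {{u, v}}) w x"
    proof (rule reach_mono)
      show "reach V (edges_avoiding E v) w x"
        using x sides[of w] w by (simp add: component_of_def)
    qed (auto simp: edges_avoiding_def)
    ultimately have "reach V (E - {{u, v}}) v x" by (rule reach_trans)
    then show "x \<in> side V E u v" by (auto simp: side_def component_of_def dest: reach_in_V)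
  qed
qed

lemma sides_disjoint:
  assumes w1: "w1 \<in> neighbours E v" and w2: "w2 \<in> neighbours E v" and "w1 \<noteq> w2"
  shows "side V E v w1 \<inter> side V E v w2 = {}"
proof (rule ccontr)
  have e1: "{v, w1} \<in> E" and e2: "{v, w2} \<in> E" using w1 w2 by (auto simp: neighbours_def)
  assume "side V E v w1 \<inter> side V E v w2 \<noteq> {}"
  then obtain x where "reach V (edges_avoiding E v) w1 x" "reach V (edges_avoiding E v) w2 x"
    by (auto simp: side_eq_component_avoiding[OF e1] side_eq_component_avoiding[OF e2]
        component_of_def)
  then have "reach V (edges_avoiding E v) w1 w2" using reach_sym reach_trans by metis
  then have "reach V (E - {{v, w1}}) w1 w2"
    by (rule reach_mono[rotated]) (auto simp: edges_avoiding_def)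
  moreover have "adj (E - {{v, w1}}) w2 v"
    using e2 edge_endpoints[OF e2] \<open>w1 \<noteq> w2\<close>
    by (auto simp: adj_def insert_commute doubleton_eq_iff)
  ultimately have "reach V (E - {{v, w1}}) w1 v"
    using reach_step edge_endpoints[OF e1] by metis
  then show False using edge_is_bridge[OF e1] by simp
qed

lemma sides_partition:
  assumes e: "{u, v} \<in> E"
  shows "side V E u v \<union> side V E v u = V" and "side V E u v \<inter> side V E v u = {}"
proof -
  define F where "F = E - {{u, v}}"
  have uv: "u \<noteq> v" "u \<in> V" "v \<in> V" using edge_endpoints[OF e] by auto
  have sides: "side V E u v = component_of V F v" "side V E v u = component_of V F u"
    by (simp_all add: side_def F_def insert_commute)
  show "side V E u v \<inter> side V E v u = {}"
  proof (rule ccontr)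
    assume "side V E u v \<inter> side V E v u \<noteq> {}"
    then obtain x where "reach V F v x" "reach V F u x"
      by (auto simp: sides component_of_def)
    then have "reach V F v u" using reach_sym reach_trans by metis
    then show False using edge_is_bridge[OF e] by (simp add: F_def)
  qed
  have "x \<in> component_of V F v \<union> component_of V F u" if "x \<in> V" for x
  proof -
    have "reach V E v x" using is_tree uv that by (simp add: is_tree_def connected_graph_def)
    then show ?thesis
    proof (induction rule: reach_induct)
      case refl
      show ?case using uv by (simp add: component_of_def reach_refl)
    next
      case (step y z)
      show ?case
      proof (cases "{y, z} = {u, v}")
        case True
        then show ?thesis using uv
          by (auto simp: component_of_def doubleton_eq_iff reach_refl)
      next
        case False
        then have "adj F y z" using step.hyps(2) by (auto simp: adj_def F_def)
        then show ?thesis using step.IH step.hyps(3) reach_step[of V F _ y z]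
          by (auto simp: component_of_def)
      qed
    qed
  qed
  then show "side V E u v \<union> side V E v u = V"
    by (auto simp: sides component_of_def)
qed

lemma card_neighbours:
  assumes "v \<in> V"
  shows "card (neighbours E v) = degree E v" and "finite (neighbours E v)"
proof -
  have "bij_betw (\<lambda>w. {v, w}) (neighbours E v) {e \<in> E. v \<in> e}"
  proof (rule bij_betwI')
    show "\<And>x y. x \<in> neighbours E v \<Longrightarrow> y \<in> neighbours E v \<Longrightarrow> {v, x} = {v, y} \<longleftrightarrow> x = y"
      by (auto simp: doubleton_eq_iff)
    show "\<And>w. w \<in> neighbours E v \<Longrightarrow> {v, w} \<in> {e \<in> E. v \<in> e}"
      by (simp add: neighbours_def)
    fix e assume e: "e \<in> {e \<in> E. v \<in> e}"
    then obtain a b where "e = {a, b}" using is_tree by (auto simp: is_tree_def simple_graph_def)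
    then have "e = {v, if a = v then b else a}" using e by auto
    then show "\<exists>w\<in>neighbours E v. e = {v, w}" using e by (auto simp: neighbours_def)
  qed
  then show "card (neighbours E v) = degree E v" by (simp add: bij_betw_same_card degree_def)
  have "neighbours E v \<subseteq> V" using edge_endpoints by (auto simp: neighbours_def)
  then show "finite (neighbours E v)" using finite_V finite_subset by blast
qed

lemma weight_side:
  assumes e: "{u, v} \<in> E"
  shows "weight \<omega> (side V E u v) = \<omega> v + (\<Sum>w\<in>neighbours E v - {u}. weight \<omega> (side V E v w))"
proof -
  let ?W = "neighbours E v - {u}"
  have v: "v \<in> V" using edge_endpoints[OF e] by simp
  then have "finite ?W" using card_neighbours(2) by blast
  have "v \<notin> (\<Union>w\<in>?W. side V E v w)"
    using vertex_notin_side by (auto simp: neighbours_def)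
  then have "weight \<omega> (side V E u v) = \<omega> v + weight \<omega> (\<Union>w\<in>?W. side V E v w)"
    using \<open>finite ?W\<close> by (simp add: side_eq_insert_sides[OF e] weight_def finite_side)
  also have "weight \<omega> (\<Union>w\<in>?W. side V E v w) = (\<Sum>w\<in>?W. weight \<omega> (side V E v w))"
    unfolding weight_def
  proof (rule sum.UNION_disjoint[OF \<open>finite ?W\<close>])
    show "\<forall>w\<in>?W. finite (side V E v w)" by (simp add: finite_side)
    show "\<forall>w1\<in>?W. \<forall>w2\<in>?W. w1 \<noteq> w2 \<longrightarrow> side V E v w1 \<inter> side V E v w2 = {}"
      using sides_disjoint by blast
  qed
  finally show ?thesis .
qed

lemma exists_heavy_side:
  assumes "card V > 1" and "\<eta> \<le> weight \<omega> V / 2"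
  shows "\<exists>u v. {u, v} \<in> E \<and> \<eta> \<le> weight \<omega> (side V E u v)"
proof -
  obtain a b where ab: "a \<in> V" "b \<in> V" "a \<noteq> b"
    using assms(1) finite_V by (metis One_nat_def card_le_Suc0_iff_eq not_le)
  then have "(a, b) \<in> {(x, y). x \<in> V \<and> y \<in> V \<and> adj E x y}\<^sup>*"
    using is_tree by (simp add: is_tree_def connected_graph_def reach_def)
  then obtain y where e: "{a, y} \<in> E"
    using ab(3) by (auto simp: adj_def elim: converse_rtranclE)
  have "weight \<omega> V = weight \<omega> (side V E a y) + weight \<omega> (side V E y a)"
    unfolding weight_def
    using sum.union_disjoint[OF finite_side finite_side sides_partition(2)[OF e]]
      sides_partition(1)[OF e] by simp
  then have "\<eta> \<le> weight \<omega> (side V E a y) \<or> \<eta> \<le> weight \<omega> (side V E y a)"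
    using assms(2) by linarith
  moreover have "{y, a} \<in> E" using e by (simp add: insert_commute)
  ultimately show ?thesis using e by blast
qed

text \<open>Take a heavy side with the fewest vertices.\<close>

lemma exists_minimal_heavy_side:
  assumes "{u, v} \<in> E" and "\<eta> \<le> weight \<omega> (side V E u v)"
  obtains u' v' where "{u', v'} \<in> E" and "\<eta> \<le> weight \<omega> (side V E u' v')"
    and "\<And>w. w \<in> neighbours E v' - {u'} \<Longrightarrow> weight \<omega> (side V E v' w) < \<eta>"
proof -
  let ?heavy = "\<lambda>(u, v). {u, v} \<in> E \<and> \<eta> \<le> weight \<omega> (side V E u v)"
  obtain u' v' where heavy: "?heavy (u', v')"
    and min: "\<And>p. ?heavy p \<Longrightarrow> card (side V E u' v') \<le> card (case p of (u, v) \<Rightarrow> side V E u v)"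
    using ex_has_least_nat[of ?heavy "(u, v)" "\<lambda>(u, v). card (side V E u v)"] assms by auto
  have "weight \<omega> (side V E v' w) < \<eta>" if w: "w \<in> neighbours E v' - {u'}" for w
  proof (rule ccontr)
    assume "\<not> weight \<omega> (side V E v' w) < \<eta>"
    moreover have e: "{v', w} \<in> E" using w by (simp add: neighbours_def)
    ultimately have "card (side V E u' v') \<le> card (side V E v' w)" using min[of "(v', w)"] by simp
    moreover have "side V E v' w \<subset> side V E u' v'"
      using side_eq_insert_sides[of u' v'] heavy w vertex_notin_side[OF e] by auto
    then have "card (side V E v' w) < card (side V E u' v')"
      by (simp add: psubset_card_mono finite_side)
    ultimately show False by simp
  qed
  then show thesis using that heavy by auto
qed

end

lemma quasi_binary_tree_degree_le_3:
  assumes qb: "quasi_binary_tree V E" and v: "v \<in> V"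
  shows "degree E v \<le> 3"
proof -
  obtain VB :: "nat set" and EB f where b: "binary_tree VB EB" and inj: "inj_on f V"
    and fV: "f ` V \<subseteq> VB" and ed: "\<forall>u v. {u, v} \<in> E \<longrightarrow> {f u, f v} \<in> EB"
    using qb unfolding quasi_binary_tree_def by blast
  have sgE: "simple_graph V E" using qb by (simp add: quasi_binary_tree_def is_tree_def)
  have sgB: "simple_graph VB EB" using b by (simp add: binary_tree_def is_tree_def)
  have "EB \<subseteq> Pow VB" using sgB by (auto simp: simple_graph_def)
  then have "finite EB" using sgB by (auto simp: simple_graph_def intro: finite_subset)
  have edges_in_V: "\<And>e. e \<in> E \<Longrightarrow> e \<subseteq> V" using sgE by (auto simp: simple_graph_def)
  have "card {e \<in> E. v \<in> e} \<le> card {e \<in> EB. f v \<in> e}"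
  proof (rule card_inj_on_le[where f="image f"])
    show "inj_on (image f) {e \<in> E. v \<in> e}"
      unfolding inj_on_def using inj_on_image_eq_iff[OF inj] edges_in_V by blast
    show "image f ` {e \<in> E. v \<in> e} \<subseteq> {e \<in> EB. f v \<in> e}"
    proof
      fix x assume "x \<in> image f ` {e \<in> E. v \<in> e}"
      then obtain e where e: "e \<in> E" "v \<in> e" "x = f ` e" by auto
      then obtain a b where "e = {a, b}" using sgE by (auto simp: simple_graph_def)
      then show "x \<in> {e \<in> EB. f v \<in> e}" using e ed by auto
    qed
    show "finite {e \<in> EB. f v \<in> e}" using \<open>finite EB\<close> by simp
  qed
  moreover have "degree EB (f v) \<le> 3"
    using b fV v unfolding binary_tree_def by force
  ultimately show ?thesis by (simp add: degree_def)
qed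

theorem lemma1:
  fixes V :: "'a set" and E :: "'a set set" and \<omega> :: "'a \<Rightarrow> real" and \<gamma> \<eta> :: real
  assumes qb: "quasi_binary_tree V E"
    and big: "card V > 1"
    and gamma3: "\<forall>v\<in>V. degree E v \<ge> 3 \<longrightarrow> \<omega> v \<le> \<gamma>"
    and eta1: "\<forall>v\<in>V. degree E v \<ge> 1 \<longrightarrow> (\<omega> v - \<gamma>) / 2 \<le> \<eta>"
    and eta2: "\<forall>v\<in>V. degree E v \<ge> 2 \<longrightarrow> \<omega> v - \<gamma> \<le> \<eta>"
    and etaT: "\<eta> \<le> weight \<omega> V / 2"
  shows "\<exists>e\<in>E. \<exists>C\<in>components V (E - {e}). \<eta> \<le> weight \<omega> C \<and> weight \<omega> C \<le> 2 * \<eta> + \<gamma>"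
proof -
  interpret tree V E using qb by unfold_locales (simp add: quasi_binary_tree_def)
  obtain u v where e: "{u, v} \<in> E" and heavy: "\<eta> \<le> weight \<omega> (side V E u v)"
    and light: "\<And>w. w \<in> neighbours E v - {u} \<Longrightarrow> weight \<omega> (side V E v w) < \<eta>"
    using exists_heavy_side[OF big etaT] exists_minimal_heavy_side by metis
  have v: "v \<in> V" and u: "u \<in> neighbours E v"
    using edge_endpoints[OF e] e by (auto simp: neighbours_def insert_commute)
  have "weight \<omega> (side V E u v) \<le> \<omega> v + real (card (neighbours E v - {u})) * \<eta>"
    using weight_side[OF e, of \<omega>] sum_bounded_above[of "neighbours E v - {u}" _ \<eta>] light
    by (simp add: less_imp_le)
  also have "card (neighbours E v - {u}) = degree E v - 1"
    using card_neighbours[OF v] u by simp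
  also have "\<omega> v + real (degree E v - 1) * \<eta> \<le> 2 * \<eta> + \<gamma>"
  proof -
    have "1 \<le> degree E v"
      using card_neighbours[OF v] u by (metis One_nat_def Suc_leI card_gt_0_iff empty_iff)
    then consider "degree E v = 1" | "degree E v = 2" | "degree E v = 3"
      using quasi_binary_tree_degree_le_3[OF qb v] by linarith
    then show ?thesis using gamma3 eta1 eta2 v by cases auto
  qed
  finally show ?thesis
    using e heavy component_of_in_components[OF v] by (auto simp: side_def)
qed

end
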